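(* Let $(f_n):\underline G=(G_n,p_n)\to\underline H=(H_n,q_n)$ be a level morphism of inverse sequences of groups such that the induced homomorphism $\tilde f:\varprojlim\underline G\to\varprojlim\underline H$, $\tilde f((g_n))=(f_n(g_n))$, is surjective. If $\underline H$ is Mittag-Leffler, then the morphism $\underline f:\underline G\to\underline H$ of \textbf{Tower-Grp} determined by $(f_n)$ is an epimorphism in \textbf{Tower-Grp}.
   Context: A level morphism $(f_n)$ consists of homomorphisms $f_n:G_n\to H_n$ with $f_n\circ p_n=q_n\circ f_{n+1}$ for all $n$. $q_{nm}=q_n\circ\cdots\circ q_{m-1}$; $\underline H$ is Mittag-Leffler if for every $n_0$ there is $n_1>n_0$ with $q_{n_0n}(H_n)=q_{n_0n_1}(H_{n_1})$ for all $n>n_1$. \textbf{Tower-Grp}: objects inverse sequences of groups; morphisms $(f_n,\Phi)$ with $\Phi:\mathbb{N}\to\mathbb{N}$, homomorphisms $f_n:G_{\Phi(n)}\to H_n$ such that for all $n'>n$ there is $m\ge\Phi(n),\Phi(n')$ with $f_n\circ p_{\Phi(n)m}=q_{nn'}\circ f_{n'}\circ p_{\Phi(n')m}$, modulo: $(f_n,\Phi)\sim(g_n,\Psi)$ if every $n$ admits $m\ge\Phi(n),\Psi(n)$ with $f_n\circ p_{\Phi(n)m}=g_n\circ p_{\Psi(n)m}$. An epimorphism is a morphism $u$ with $a\circ u=b\circ u\Rightarrow a=b$. *)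

theory Defs
  imports "HOL-Algebra.Group"
begin

definition inverse_seq :: "(nat \<Rightarrow> 'a monoid) \<Rightarrow> (nat \<Rightarrow> 'a \<Rightarrow> 'a) \<Rightarrow> bool" where
  "inverse_seq G p \<longleftrightarrow> (\<forall>n. group (G n)) \<and> (\<forall>n. p n \<in> hom (G (Suc n)) (G n))"

fun bond_aux :: "(nat \<Rightarrow> 'a \<Rightarrow> 'a) \<Rightarrow> nat \<Rightarrow> nat \<Rightarrow> 'a \<Rightarrow> 'a" where
  "bond_aux p n 0 = id"
| "bond_aux p n (Suc k) = bond_aux p n k \<circ> p (n + k)"

definition bond :: "(nat \<Rightarrow> 'a \<Rightarrow> 'a) \<Rightarrow> nat \<Rightarrow> nat \<Rightarrow> 'a \<Rightarrow> 'a" where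
  "bond p n m = bond_aux p n (m - n)"

definition level_morphism ::
  "(nat \<Rightarrow> 'a monoid) \<Rightarrow> (nat \<Rightarrow> 'a \<Rightarrow> 'a) \<Rightarrow> (nat \<Rightarrow> 'b monoid) \<Rightarrow> (nat \<Rightarrow> 'b \<Rightarrow> 'b)
   \<Rightarrow> (nat \<Rightarrow> 'a \<Rightarrow> 'b) \<Rightarrow> bool" where
  "level_morphism G p H q f \<longleftrightarrow>
     (\<forall>n. f n \<in> hom (G n) (H n)) \<and>
     (\<forall>n. \<forall>x \<in> carrier (G (Suc n)). f n (p n x) = q n (f (Suc n) x))"

definition mittag_leffler :: "(nat \<Rightarrow> 'b monoid) \<Rightarrow> (nat \<Rightarrow> 'b \<Rightarrow> 'b) \<Rightarrow> bool" where
  "mittag_leffler H q \<longleftrightarrow>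
     (\<forall>n0. \<exists>n1 > n0. \<forall>n > n1. bond q n0 n ` carrier (H n) = bond q n0 n1 ` carrier (H n1))"

definition inv_lim :: "(nat \<Rightarrow> 'a monoid) \<Rightarrow> (nat \<Rightarrow> 'a \<Rightarrow> 'a) \<Rightarrow> (nat \<Rightarrow> 'a) set" where
  "inv_lim G p = {g. (\<forall>n. g n \<in> carrier (G n)) \<and> (\<forall>n. p n (g (Suc n)) = g n)}"

text \<open>Representatives (f_n, Phi) of morphisms of Tower-Grp.\<close>
definition tower_mor ::
  "(nat \<Rightarrow> 'a monoid) \<Rightarrow> (nat \<Rightarrow> 'a \<Rightarrow> 'a) \<Rightarrow> (nat \<Rightarrow> 'b monoid) \<Rightarrow> (nat \<Rightarrow> 'b \<Rightarrow> 'b)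
   \<Rightarrow> (nat \<Rightarrow> 'a \<Rightarrow> 'b) \<Rightarrow> (nat \<Rightarrow> nat) \<Rightarrow> bool" where
  "tower_mor G p H q f \<Phi> \<longleftrightarrow>
     (\<forall>n. f n \<in> hom (G (\<Phi> n)) (H n)) \<and>
     (\<forall>n n'. n < n' \<longrightarrow> (\<exists>m. m \<ge> \<Phi> n \<and> m \<ge> \<Phi> n' \<and>
        (\<forall>x \<in> carrier (G m). f n (bond p (\<Phi> n) m x) = bond q n n' (f n' (bond p (\<Phi> n') m x)))))"

definition tower_eq ::
  "(nat \<Rightarrow> 'a monoid) \<Rightarrow> (nat \<Rightarrow> 'a \<Rightarrow> 'a)
   \<Rightarrow> (nat \<Rightarrow> 'a \<Rightarrow> 'b) \<Rightarrow> (nat \<Rightarrow> nat) \<Rightarrow> (nat \<Rightarrow> 'a \<Rightarrow> 'b) \<Rightarrow> (nat \<Rightarrow> nat) \<Rightarrow> bool" where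
  "tower_eq G p f \<Phi> g \<Psi> \<longleftrightarrow>
     (\<forall>n. \<exists>m. m \<ge> \<Phi> n \<and> m \<ge> \<Psi> n \<and>
        (\<forall>x \<in> carrier (G m). f n (bond p (\<Phi> n) m x) = g n (bond p (\<Psi> n) m x)))"

definition tower_comp_fun :: "(nat \<Rightarrow> 'b \<Rightarrow> 'c) \<Rightarrow> (nat \<Rightarrow> nat) \<Rightarrow> (nat \<Rightarrow> 'a \<Rightarrow> 'b) \<Rightarrow> nat \<Rightarrow> 'a \<Rightarrow> 'c" where
  "tower_comp_fun a A f = (\<lambda>n. a n \<circ> f (A n))"

definition tower_comp_idx :: "(nat \<Rightarrow> nat) \<Rightarrow> (nat \<Rightarrow> nat) \<Rightarrow> nat \<Rightarrow> nat" where
  "tower_comp_idx A \<Phi> = \<Phi> \<circ> A"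

text \<open>Epimorphism in Tower-Grp, tested against all target towers K whose groups live on type 'c.
  (The theorem quantifies over all types 'c via a free type variable.)\<close>
definition tower_epi ::
  "'c itself \<Rightarrow> (nat \<Rightarrow> 'a monoid) \<Rightarrow> (nat \<Rightarrow> 'a \<Rightarrow> 'a) \<Rightarrow> (nat \<Rightarrow> 'b monoid) \<Rightarrow> (nat \<Rightarrow> 'b \<Rightarrow> 'b)
   \<Rightarrow> (nat \<Rightarrow> 'a \<Rightarrow> 'b) \<Rightarrow> (nat \<Rightarrow> nat) \<Rightarrow> bool" where
  "tower_epi (_::'c itself) G p H q f \<Phi> \<longleftrightarrow>
     (\<forall>(K :: nat \<Rightarrow> 'c monoid) r a A b B.
        inverse_seq K r \<longrightarrow> tower_mor H q K r a A \<longrightarrow> tower_mor H q K r b B \<longrightarrow>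
        tower_eq G p (tower_comp_fun a A f) (tower_comp_idx A \<Phi>)
                     (tower_comp_fun b B f) (tower_comp_idx B \<Phi>) \<longrightarrow>
        tower_eq H q a A b B)"

end

theory Submission
  imports Defs
begin

text \<open>If two morphisms out of \<open>H\<close> agree after composition with \<open>f\<close>, witnessed at level
  \<open>m\<close>, then they agree on every element of a deeper \<open>H\<^sub>N\<close> whose image in \<open>H\<^sub>m\<close> lies in
  \<open>f\<^sub>m(G\<^sub>m)\<close>, since the \<open>f\<^sub>k\<close> commute with the bonding maps. Elements of \<open>H\<^sub>m\<close> that
  extend to threads of \<open>lim H\<close> lie there because \<open>lim f\<close> is surjective. By the
  Mittag-Leffler condition the stable images form a subtower with surjective bonding maps,
  so the whole image of some \<open>H\<^sub>N\<close> in \<open>H\<^sub>m\<close> consists of such elements.\<close>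

lemma bond_aux_add: "bond_aux p n (k + l) = bond_aux p n k \<circ> bond_aux p (n + k) l"
  by (induction l) (auto simp: add.assoc)

lemma bond_trans:
  assumes "a \<le> b" "b \<le> c"
  shows "bond q a c x = bond q a b (bond q b c x)"
proof -
  have "c - a = (b - a) + (c - b)" "a + (b - a) = b" using assms by simp_all
  then show ?thesis unfolding bond_def by (metis bond_aux_add comp_apply)
qed

lemma bond_Suc: "bond q k (Suc k) = q k"
  unfolding bond_def by simp

lemma bond_refl: "bond q k k = id"
  unfolding bond_def by simp

lemma bond_aux_closed:
  assumes "inverse_seq H q" "x \<in> carrier (H (n + k))"
  shows "bond_aux q n k x \<in> carrier (H n)"
  using assms(2)
proof (induction k arbitrary: x)
  case (Suc k)
  then have "q (n + k) x \<in> carrier (H (n + k))"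
    using assms(1) unfolding inverse_seq_def hom_def by auto
  then show ?case using Suc.IH by simp
qed simp

lemma bond_closed:
  assumes "inverse_seq H q" "n \<le> m" "x \<in> carrier (H m)"
  shows "bond q n m x \<in> carrier (H n)"
  using bond_aux_closed[OF assms(1), where n=n and k="m - n"] assms(2,3) unfolding bond_def by simp

lemma level_morphism_bond_aux:
  assumes "inverse_seq G p" "level_morphism G p H q f" "x \<in> carrier (G (n + k))"
  shows "f n (bond_aux p n k x) = bond_aux q n k (f (n + k) x)"
  using assms(3)
proof (induction k arbitrary: x)
  case (Suc k)
  have "p (n + k) x \<in> carrier (G (n + k))"
    using assms(1) Suc.prems unfolding inverse_seq_def hom_def by auto
  then have "f n (bond_aux p n k (p (n + k) x)) = bond_aux q n k (f (n + k) (p (n + k) x))"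
    using Suc.IH by simp
  also have "f (n + k) (p (n + k) x) = q (n + k) (f (Suc (n + k)) x)"
    using assms(2) Suc.prems unfolding level_morphism_def by auto
  finally show ?case by simp
qed simp

lemma level_morphism_bond:
  assumes "inverse_seq G p" "level_morphism G p H q f" "n \<le> m" "x \<in> carrier (G m)"
  shows "f n (bond p n m x) = bond q n m (f m x)"
  using level_morphism_bond_aux[OF assms(1,2), where n=n and k="m - n"] assms(3,4)
  unfolding bond_def by simp

lemma lifting_sequence_exists:
  assumes lift: "\<And>k z. z \<in> S k \<Longrightarrow> \<exists>w \<in> S (Suc k). q k w = z" and y: "y \<in> S m"
  obtains t where "t 0 = y" "\<And>j. t j \<in> S (m + j)" "\<And>j. q (m + j) (t (Suc j)) = t j"
proof -
  have lift': "\<exists>w. w \<in> S (Suc k) \<and> q k w = z" if "z \<in> S k" for k z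
    using lift[OF that] by blast
  define t where "t = rec_nat y (\<lambda>j z. SOME w. w \<in> S (Suc (m + j)) \<and> q (m + j) w = z)"
  have tS: "t j \<in> S (m + j)" for j
  proof (induction j)
    case (Suc j)
    then show ?case
      using someI_ex[OF lift'[OF Suc]] by (simp add: t_def)
  qed (simp add: t_def y)
  moreover have "q (m + j) (t (Suc j)) = t j" for j
    using someI_ex[OF lift'[OF tS]] by (simp add: t_def)
  moreover have "t 0 = y" by (simp add: t_def)
  ultimately show ?thesis using that by blast
qed

lemma inv_lim_thread_through:
  assumes H: "inverse_seq H q"
    and S_carrier: "\<And>k. S k \<subseteq> carrier (H k)"
    and S_lift: "\<And>k z. z \<in> S k \<Longrightarrow> \<exists>w \<in> S (Suc k). q k w = z"
  shows "S m \<subseteq> (\<lambda>h. h m) ` inv_lim H q"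
proof
  fix y assume "y \<in> S m"
  obtain t where t0: "t 0 = y" and tS: "\<And>j. t j \<in> S (m + j)"
    and tq: "\<And>j. q (m + j) (t (Suc j)) = t j"
    using lifting_sequence_exists[of S q, OF S_lift \<open>y \<in> S m\<close>] by blast
  define h where "h k = bond q k (m + k) (t k)" for k
  have "h k \<in> carrier (H k)" for k
    unfolding h_def using bond_closed[OF H _ subsetD[OF S_carrier tS]] by simp
  moreover have "q k (h (Suc k)) = h k" for k
  proof -
    have "q k (h (Suc k)) = bond q k (m + Suc k) (t (Suc k))"
      unfolding h_def using bond_trans[of k "Suc k" "m + Suc k" q] by (simp add: bond_Suc)
    also have "\<dots> = h k"
      unfolding h_def using bond_trans[of k "m + k" "Suc (m + k)" q] by (simp add: bond_Suc tq)
    finally show ?thesis .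
  qed
  ultimately have "h \<in> inv_lim H q" unfolding inv_lim_def by blast
  moreover have "bond q m (m + j) (t j) = y" for j
  proof (induction j)
    case (Suc j)
    then show ?case
      using bond_trans[of m "m + j" "Suc (m + j)" q] by (simp add: bond_Suc tq)
  qed (simp add: bond_refl t0)
  then have "h m = y" unfolding h_def by simp
  ultimately show "y \<in> (\<lambda>h. h m) ` inv_lim H q" by blast
qed

lemma mittag_leffler_stable_index:
  assumes "mittag_leffler H q"
  obtains N where "\<And>k. k < N k"
    and "\<And>k n. N k \<le> n \<Longrightarrow> bond q k n ` carrier (H n) = bond q k (N k) ` carrier (H (N k))"
proof -
  have "\<forall>k. \<exists>N > k. \<forall>n \<ge> N. bond q k n ` carrier (H n) = bond q k N ` carrier (H N)"
    using assms unfolding mittag_leffler_def by (metis order_le_less)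
  then show ?thesis using that by metis
qed

lemma mittag_leffler_bond_image_subset_threads:
  assumes H: "inverse_seq H q" and ml: "mittag_leffler H q"
  obtains N where "m < N" "bond q m N ` carrier (H N) \<subseteq> (\<lambda>h. h m) ` inv_lim H q"
proof -
  obtain N where N_gt: "\<And>k. k < N k"
    and N_stable: "\<And>k n. N k \<le> n \<Longrightarrow> bond q k n ` carrier (H n) = bond q k (N k) ` carrier (H (N k))"
    using mittag_leffler_stable_index[OF ml] by blast
  define S where "S k = bond q k (N k) ` carrier (H (N k))" for k
  have "S k \<subseteq> carrier (H k)" for k
    unfolding S_def using bond_closed[OF H] N_gt[of k] by fastforce
  moreover have "\<exists>w \<in> S (Suc k). q k w = z" if "z \<in> S k" for k z
  proof -
    define n where "n = N k + N (Suc k)"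
    have "z \<in> bond q k n ` carrier (H n)"
      using that N_stable[of k n] unfolding S_def n_def by simp
    then obtain u where u: "u \<in> carrier (H n)" "z = bond q k n u" by blast
    have "bond q (Suc k) n u \<in> S (Suc k)"
      using N_stable[of "Suc k" n] u(1) unfolding S_def n_def by auto
    moreover have "Suc k \<le> n" using N_gt[of "Suc k"] unfolding n_def by simp
    then have "q k (bond q (Suc k) n u) = z"
      using bond_trans[of k "Suc k" n q u] u(2) by (simp add: bond_Suc)
    ultimately show ?thesis by blast
  qed
  ultimately have "S m \<subseteq> (\<lambda>h. h m) ` inv_lim H q"
    by (rule inv_lim_thread_through[OF H])
  then show ?thesis unfolding S_def by (rule that[OF N_gt[of m]])
qed

lemma bond_image_subset_level_image:
  assumes H: "inverse_seq H q"
    and lim_surj: "\<forall>h \<in> inv_lim H q. \<exists>g \<in> inv_lim G p. (\<lambda>n. f n (g n)) = h"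
    and ml: "mittag_leffler H q"
  obtains N where "m < N" "bond q m N ` carrier (H N) \<subseteq> f m ` carrier (G m)"
proof -
  obtain N where "m < N" and N: "bond q m N ` carrier (H N) \<subseteq> (\<lambda>h. h m) ` inv_lim H q"
    using mittag_leffler_bond_image_subset_threads[OF H ml] .
  have "h m \<in> f m ` carrier (G m)" if "h \<in> inv_lim H q" for h
  proof -
    obtain g where g: "g \<in> inv_lim G p" "(\<lambda>n. f n (g n)) = h"
      using lim_surj \<open>h \<in> inv_lim H q\<close> by blast
    have "h m = f m (g m)" using g(2) by auto
    moreover have "g m \<in> carrier (G m)" using g(1) unfolding inv_lim_def by blast
    ultimately show ?thesis by (rule image_eqI)
  qed
  then have "(\<lambda>h. h m) ` inv_lim H q \<subseteq> f m ` carrier (G m)" by blast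
  then show ?thesis by (rule that[OF \<open>m < N\<close> order_trans[OF N]])
qed

theorem proposition8p14:
  fixes G :: "nat \<Rightarrow> 'a monoid" and p :: "nat \<Rightarrow> 'a \<Rightarrow> 'a"
    and H :: "nat \<Rightarrow> 'b monoid" and q :: "nat \<Rightarrow> 'b \<Rightarrow> 'b"
    and f :: "nat \<Rightarrow> 'a \<Rightarrow> 'b"
  assumes "inverse_seq G p" and "inverse_seq H q"
    and "level_morphism G p H q f"
    and "\<forall>h \<in> inv_lim H q. \<exists>g \<in> inv_lim G p. (\<lambda>n. f n (g n)) = h"
    and "mittag_leffler H q"
  shows "tower_epi TYPE('c) G p H q f id"
  unfolding tower_epi_def
proof (intro allI impI)
  fix K :: "nat \<Rightarrow> 'c monoid" and r a A b B
  assume eq: "tower_eq G p (tower_comp_fun a A f) (tower_comp_idx A id)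
                           (tower_comp_fun b B f) (tower_comp_idx B id)"
  show "tower_eq H q a A b B"
    unfolding tower_eq_def
  proof
    fix n
    obtain m where m: "A n \<le> m" "B n \<le> m"
      "\<And>x. x \<in> carrier (G m) \<Longrightarrow>
         a n (f (A n) (bond p (A n) m x)) = b n (f (B n) (bond p (B n) m x))"
      using eq[unfolded tower_eq_def, rule_format, of n]
      unfolding tower_comp_fun_def tower_comp_idx_def by auto
    obtain N where N: "m < N" "bond q m N ` carrier (H N) \<subseteq> f m ` carrier (G m)"
      using bond_image_subset_level_image[OF assms(2,4,5)] .
    have down: "bond q k N y = f k (bond p k m x)"
      if "k \<le> m" "x \<in> carrier (G m)" "bond q m N y = f m x" for k x y
      using that N(1) bond_trans[of k m N q y] level_morphism_bond[OF assms(1,3) that(1,2)] by simp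
    have "a n (bond q (A n) N y) = b n (bond q (B n) N y)" if y: "y \<in> carrier (H N)" for y
    proof -
      obtain x where "x \<in> carrier (G m)" "bond q m N y = f m x"
        using subsetD[OF N(2) imageI[OF y]] by blast
      then show ?thesis using m down by simp
    qed
    with N(1) m(1,2) show "\<exists>N \<ge> A n. N \<ge> B n \<and>
        (\<forall>y \<in> carrier (H N). a n (bond q (A n) N y) = b n (bond q (B n) N y))"
      by (intro exI[of _ N]) auto
  qed
qed

end
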